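(* Let $M \le N$, let $F:\mathbb{R}^M\to\mathbb{R}^M$ be a differentiable latent map, and let $G:\mathbb{R}^M\to\mathbb{R}^N$, $G(\bm z)=\bm B\bm z$, be a linear observation model with $\bm B\in\mathbb{R}^{N\times M}$ of full rank. Let $\bm J(\bm z)=\partial F(\bm z)/\partial \bm z$ and suppose $$\tilde\sigma_{\max}:=\sup\{\|\bm J(\bm z)\|_2=\sigma_{\max}(\bm J(\bm z)) : \bm z\in\mathbb{R}^M\}$$ satisfies $1<\tilde\sigma_{\max}<\infty$. Choose the forcing strength $\alpha\in(\alpha^*,1]$, where $\alpha^*:=1-\tilde\sigma_{\max}^{-1}$, and set $$\rho:=(1-\alpha)\,\tilde\sigma_{\max}.$$ Then $\rho<1$, and the forced system $F\circ\delta_{\alpha,\bm B}$ is globally contracting with rate $\rho$: for every teacher sequence $(\bm x_t)_{t\ge 0}$ in $\mathbb{R}^N$, every $t$ and every $\bm z\in\mathbb{R}^M$, the Jacobian of the forced map $\bm z\mapsto F(\delta_{\alpha,\bm B}(\bm z,\bm x_t))$ has spectral norm at most $\rho$. Moreover, the largest Lyapunov exponent of the forced system (along any orbit) satisfies $$\lambda_{\mathrm{GTF}}\le \log\rho<0.$$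
   Context: Generalized teacher forcing: for a forcing strength $\alpha\in[0,1]$ and observation matrix $\bm B$ with Moore–Penrose pseudo-inverse $\bm B^+$, define $\delta_{\alpha,\bm B}(\bm z,\bm x)=(\bm I-\alpha\bm B^+\bm B)\bm z+\alpha\bm B^+\bm x$. The forced system is the (non-autonomous) recursion $\bm z_t=F(\delta_{\alpha,\bm B}(\bm z_{t-1},\bm x_{t-1}))$ driven by a given data (teacher) sequence $\bm x_t\in\mathbb{R}^N$. For an iterated (possibly time-dependent) map with Jacobians $\bm J_t$ evaluated along the orbit starting at $\bm z_0$, the largest Lyapunov exponent is $\lambda(\bm z_0)=\lim_{T\to\infty}\frac1T\log\|\bm J_T\bm J_{T-1}\cdots\bm J_1\|_2$; the map is called contracting at $\bm z_0$ if $\lambda(\bm z_0)<0$ and divergent if $\lambda(\bm z_0)>0$. $\lambda_{\mathrm{GTF}}$ denotes this exponent for the forced system, with $\bm J_t$ the Jacobian of $\bm z\mapsto F(\delta_{\alpha,\bm B}(\bm z,\bm x_{t-1}))$ at $\bm z_{t-1}$. *)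

theory Defs
  imports "HOL-Analysis.Analysis"
begin

text \<open>Moore--Penrose pseudo-inverse of a matrix B (N x M, i.e. real^'m^'n),
  characterised by the four Penrose conditions (it exists and is unique).\<close>
definition pinv :: "real^'m^'n \<Rightarrow> real^'n^'m" where
  "pinv B = (THE P. B ** P ** B = B \<and> P ** B ** P = P \<and>
               transpose (B ** P) = B ** P \<and> transpose (P ** B) = P ** B)"

definition spec_norm :: "real^'a^'b \<Rightarrow> real" where
  "spec_norm A = onorm (\<lambda>v. A *v v)"

definition jacobian :: "(real^'m \<Rightarrow> real^'m) \<Rightarrow> real^'m \<Rightarrow> real^'m^'m" where
  "jacobian F z = matrix (frechet_derivative F (at z))"

definition gtf_delta :: "real \<Rightarrow> real^'m^'n \<Rightarrow> real^'m \<Rightarrow> real^'n \<Rightarrow> real^'m" where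
  "gtf_delta \<alpha> B z x = (mat 1 - \<alpha> *\<^sub>R (pinv B ** B)) *v z + \<alpha> *\<^sub>R (pinv B *v x)"

primrec forced_orbit :: "(real^'m \<Rightarrow> real^'m) \<Rightarrow> real \<Rightarrow> real^'m^'n \<Rightarrow> (nat \<Rightarrow> real^'n)
    \<Rightarrow> real^'m \<Rightarrow> nat \<Rightarrow> real^'m" where
  "forced_orbit F \<alpha> B xs z0 0 = z0"
| "forced_orbit F \<alpha> B xs z0 (Suc t) = F (gtf_delta \<alpha> B (forced_orbit F \<alpha> B xs z0 t) (xs t))"

primrec jac_product :: "(real^'m \<Rightarrow> real^'m) \<Rightarrow> real \<Rightarrow> real^'m^'n \<Rightarrow> (nat \<Rightarrow> real^'n)
    \<Rightarrow> real^'m \<Rightarrow> nat \<Rightarrow> real^'m^'m" where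
  "jac_product F \<alpha> B xs z0 0 = mat 1"
| "jac_product F \<alpha> B xs z0 (Suc T) =
     jacobian (\<lambda>z. F (gtf_delta \<alpha> B z (xs T))) (forced_orbit F \<alpha> B xs z0 T)
     ** jac_product F \<alpha> B xs z0 T"

definition elog :: "real \<Rightarrow> ereal" where
  "elog x = (if x > 0 then ereal (ln x) else -\<infinity>)"

text \<open>Largest Lyapunov exponent of the forced system along the orbit from z0
  (as limsup; it equals the limit whenever the limit exists).\<close>
definition lyap_gtf :: "(real^'m \<Rightarrow> real^'m) \<Rightarrow> real \<Rightarrow> real^'m^'n \<Rightarrow> (nat \<Rightarrow> real^'n)
    \<Rightarrow> real^'m \<Rightarrow> ereal" where
  "lyap_gtf F \<alpha> B xs z0 =
     limsup (\<lambda>T. ereal (1 / real T) * elog (spec_norm (jac_product F \<alpha> B xs z0 T)))"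

end

theory Submission imports Defs begin

text \<open>Because \<open>B\<close> has full column rank, \<open>B\<^sup>+ B = I\<close>, so the forcing map
  \<open>\<delta>(z, x) = (1 - \<alpha>) z + \<alpha> B\<^sup>+ x\<close> is affine with linear part \<open>(1 - \<alpha>) I\<close>. By the chain rule
  the Jacobian of the forced map is \<open>(1 - \<alpha>) J\<close> evaluated at a shifted point, hence has
  spectral norm at most \<open>\<rho> = (1 - \<alpha>) sup\<^sub>z \<parallel>J(z)\<parallel>\<close>, and \<open>\<rho> < 1\<close> is exactly the condition \<open>\<alpha> > \<alpha>\<^sup>*\<close>.
  Submultiplicativity of the spectral norm bounds the product of \<open>T\<close> Jacobians by \<open>\<rho>\<^sup>T\<close>,
  so the Lyapunov exponent is at most \<open>log \<rho> < 0\<close>.\<close>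

definition penrose_inverse :: "real^'m^'n \<Rightarrow> real^'n^'m \<Rightarrow> bool" where
  "penrose_inverse B P \<longleftrightarrow> B ** P ** B = B \<and> P ** B ** P = P \<and>
     transpose (B ** P) = B ** P \<and> transpose (P ** B) = P ** B"

lemma pinv_eq_The_penrose_inverse: "pinv B = (THE P. penrose_inverse B P)"
  by (simp add: pinv_def penrose_inverse_def)

lemma inj_transpose_mult_self:
  fixes B :: "real^'m^'n"
  assumes "inj ((*v) B)"
  shows "inj ((*v) (transpose B ** B))"
proof (rule injI)
  fix x y assume "(transpose B ** B) *v x = (transpose B ** B) *v y"
  then have "(transpose B ** B) *v (x - y) = 0"
    by (simp add: matrix_vector_mult_diff_distrib)
  moreover have "(x - y) \<bullet> ((transpose B ** B) *v (x - y)) = (B *v (x - y)) \<bullet> (B *v (x - y))"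
    by (metis dot_lmul_matrix inner_commute matrix_vector_mul_assoc transpose_matrix_vector)
  ultimately have "B *v (x - y) = 0" by simp
  then show "x = y"
    using assms by (simp add: matrix_vector_mult_diff_distrib inj_eq)
qed

lemma left_inverse_if_generalized_inverse:
  fixes B :: "real^'m^'n"
  assumes "inj ((*v) B)" and "B ** P ** B = B"
  shows "P ** B = mat 1"
proof -
  have "B *v ((P ** B) *v x) = B *v x" for x
    by (metis assms(2) matrix_vector_mul_assoc)
  then have "(P ** B) *v x = mat 1 *v x" for x
    using assms(1) by (simp add: inj_eq)
  then show ?thesis by (simp add: matrix_eq)
qed

text \<open>For full column rank \<open>B\<^sup>+ = (B\<^sup>T B)\<^sup>-\<^sup>1 B\<^sup>T\<close>; here \<open>L\<close> is the inverse of the Gram matrix.\<close>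

lemma penrose_inverse_gram:
  fixes B :: "real^'m^'n"
  assumes L: "L ** (transpose B ** B) = mat 1"
  shows "penrose_inverse B (L ** transpose B)"
proof -
  let ?C = "transpose B ** B"
  have CL: "?C ** L = mat 1" using L matrix_left_right_inverse by blast
  have "transpose L ** ?C = mat 1"
    by (metis CL matrix_transpose_mul transpose_mat transpose_transpose)
  then have L_sym: "transpose L = L"
    by (metis CL matrix_mul_assoc matrix_mul_lid matrix_mul_rid)
  have PB: "L ** transpose B ** B = mat 1"
    using L by (simp add: matrix_mul_assoc)
  show ?thesis unfolding penrose_inverse_def
  proof (intro conjI)
    show "B ** (L ** transpose B) ** B = B"
      by (metis PB matrix_mul_assoc matrix_mul_rid)
    show "transpose (B ** (L ** transpose B)) = B ** (L ** transpose B)"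
      by (simp add: matrix_transpose_mul L_sym matrix_mul_assoc)
  qed (simp_all add: PB)
qed

lemma penrose_inverse_eq_gram:
  fixes B :: "real^'m^'n"
  assumes L: "L ** (transpose B ** B) = mat 1" and P: "penrose_inverse B P"
  shows "P = L ** transpose B"
proof -
  have "transpose B ** B ** P = transpose B ** transpose (B ** P)"
    using P by (simp add: penrose_inverse_def matrix_mul_assoc)
  also have "\<dots> = transpose (B ** P ** B)"
    by (simp add: matrix_transpose_mul)
  also have "\<dots> = transpose B"
    using P by (simp add: penrose_inverse_def)
  finally have gram_P: "transpose B ** B ** P = transpose B" .
  have "P = L ** (transpose B ** B) ** P"
    using L by simp
  also have "\<dots> = L ** (transpose B ** B ** P)"
    by (simp only: matrix_mul_assoc)
  also have "\<dots> = L ** transpose B"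
    by (simp only: gram_P)
  finally show ?thesis .
qed

lemma pinv_mult_self:
  fixes B :: "real^'m^'n"
  assumes "rank B = CARD('m)"
  shows "pinv B ** B = mat 1"
proof -
  have inj: "inj ((*v) B)" using assms full_rank_injective by blast
  then obtain L where L: "L ** (transpose B ** B) = mat 1"
    using inj_transpose_mult_self matrix_left_invertible_injective by blast
  have "\<exists>!P. penrose_inverse B P"
    using penrose_inverse_gram[OF L] penrose_inverse_eq_gram[OF L] by blast
  then have "penrose_inverse B (pinv B)"
    unfolding pinv_eq_The_penrose_inverse by (rule theI')
  then show ?thesis
    using inj left_inverse_if_generalized_inverse unfolding penrose_inverse_def by blast
qed

lemma gtf_delta_full_rank:
  fixes B :: "real^'m^'n"
  assumes "rank B = CARD('m)"
  shows "gtf_delta \<alpha> B z x = (1 - \<alpha>) *\<^sub>R z + \<alpha> *\<^sub>R (pinv B *v x)"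
  unfolding gtf_delta_def pinv_mult_self[OF assms]
  by (simp add: matrix_vector_mult_diff_rdistrib scaleR_matrix_vector_assoc[symmetric]
      algebra_simps)

lemma spec_norm_nonneg: "0 \<le> spec_norm (A :: real^'a^'b)"
  unfolding spec_norm_def by (simp add: onorm_pos_le matrix_vector_mul_bounded_linear)

lemma spec_norm_mat_1: "spec_norm (mat 1 :: real^'a^'a) = 1"
  by (simp add: spec_norm_def onorm_id)

lemma spec_norm_scaleR: "spec_norm (c *\<^sub>R A) = \<bar>c\<bar> * spec_norm (A :: real^'a^'b)"
  unfolding spec_norm_def scaleR_matrix_vector_assoc[symmetric]
  by (rule onorm_scaleR[OF matrix_vector_mul_bounded_linear])

lemma spec_norm_mult:
  fixes A :: "real^'b^'c" and C :: "real^'a^'b"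
  shows "spec_norm (A ** C) \<le> spec_norm A * spec_norm C"
proof -
  have "(\<lambda>v. (A ** C) *v v) = (\<lambda>v. A *v v) \<circ> (\<lambda>v. C *v v)"
    by (auto simp: matrix_vector_mul_assoc)
  then show ?thesis unfolding spec_norm_def
    by (metis onorm_compose matrix_vector_mul_bounded_linear)
qed

lemma matrix_scaleR_linear:
  fixes f :: "real^'a \<Rightarrow> real^'b"
  assumes "linear f"
  shows "matrix (\<lambda>v. c *\<^sub>R f v) = c *\<^sub>R matrix f"
proof -
  have "(\<lambda>v. c *\<^sub>R f v) = (\<lambda>v. (c *\<^sub>R matrix f) *v v)"
    using assms by (simp add: scaleR_matrix_vector_assoc[symmetric])
  then show ?thesis by simp
qed

lemma jacobian_comp_scaleR_affine:
  fixes F :: "real^'m \<Rightarrow> real^'m"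
  assumes "F differentiable (at (c *\<^sub>R z + b))"
  shows "jacobian (\<lambda>w. F (c *\<^sub>R w + b)) z = c *\<^sub>R jacobian F (c *\<^sub>R z + b)"
proof -
  define f' where "f' = frechet_derivative F (at (c *\<^sub>R z + b))"
  have F': "(F has_derivative f') (at (c *\<^sub>R z + b))"
    using assms frechet_derivative_works unfolding f'_def by blast
  have "((\<lambda>w. c *\<^sub>R w + b) has_derivative (\<lambda>v. c *\<^sub>R v)) (at z)"
    by (auto intro!: derivative_eq_intros)
  from diff_chain_at[OF this F']
  have "((\<lambda>w. F (c *\<^sub>R w + b)) has_derivative (\<lambda>v. c *\<^sub>R f' v)) (at z)"
    using linear_cmul[OF has_derivative_linear[OF F']] by (simp add: o_def)
  then have "frechet_derivative (\<lambda>w. F (c *\<^sub>R w + b)) (at z) = (\<lambda>v. c *\<^sub>R f' v)"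
    by (rule frechet_derivative_at[symmetric])
  then show ?thesis
    unfolding jacobian_def f'_def[symmetric]
    using matrix_scaleR_linear has_derivative_linear[OF F'] by simp
qed

lemma spec_norm_jac_product_le:
  assumes "\<And>t z. spec_norm (jacobian (\<lambda>w. F (gtf_delta \<alpha> B w (xs t))) z) \<le> r"
  shows "spec_norm (jac_product F \<alpha> B xs z0 T) \<le> r ^ T"
proof (induction T)
  case 0
  then show ?case by (simp add: spec_norm_mat_1)
next
  case (Suc T)
  have "0 \<le> r" using assms[of 0 z0] spec_norm_nonneg order_trans by blast
  have "spec_norm (jac_product F \<alpha> B xs z0 (Suc T)) \<le>
     spec_norm (jacobian (\<lambda>w. F (gtf_delta \<alpha> B w (xs T))) (forced_orbit F \<alpha> B xs z0 T))
     * spec_norm (jac_product F \<alpha> B xs z0 T)"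
    by (simp add: spec_norm_mult)
  also have "\<dots> \<le> r * r ^ T"
    by (intro mult_mono assms Suc.IH \<open>0 \<le> r\<close> spec_norm_nonneg)
  finally show ?case by simp
qed

lemma scaled_elog_le_if_le_power:
  assumes "1 \<le> T" "0 \<le> r" "s \<le> r ^ T"
  shows "ereal (1 / real T) * elog s \<le> elog r"
proof (cases "0 < s")
  case False
  then show ?thesis using assms(1) by (simp add: elog_def)
next
  case True
  with assms(3) have "r ^ T \<noteq> 0" by linarith
  with assms(1,2) have "0 < r" by (simp add: power_eq_0_iff)
  have "ln s \<le> ln (r ^ T)"
    using True assms \<open>0 < r\<close> by simp
  also have "\<dots> = real T * ln r"
    using \<open>0 < r\<close> by (simp add: ln_realpow)
  finally have "ln s \<le> real T * ln r" .
  then have "ln s / real T \<le> ln r"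
    using assms by (simp add: divide_le_eq mult.commute)
  then show ?thesis using True \<open>0 < r\<close> by (simp add: elog_def)
qed

lemma lyap_gtf_le_elog:
  assumes "\<And>t z. spec_norm (jacobian (\<lambda>w. F (gtf_delta \<alpha> B w (xs t))) z) \<le> r"
  shows "lyap_gtf F \<alpha> B xs z0 \<le> elog r"
  unfolding lyap_gtf_def
proof (rule Limsup_bounded, unfold eventually_sequentially, intro exI allI impI)
  fix T :: nat assume "1 \<le> T"
  moreover have "0 \<le> r" using assms[of 0 z0] spec_norm_nonneg order_trans by blast
  ultimately show "ereal (1 / real T) * elog (spec_norm (jac_product F \<alpha> B xs z0 T)) \<le> elog r"
    by (rule scaled_elog_le_if_le_power[OF _ _ spec_norm_jac_product_le[OF assms]])
qed

theorem proposition1: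
  fixes F :: "real^'m \<Rightarrow> real^'m"
    and B :: "real^'m^'n"
    and \<alpha> :: real
  assumes MN: "CARD('m) \<le> CARD('n)"
    and full_rank: "rank B = CARD('m)"
    and diff: "\<forall>z. F differentiable (at z)"
    and bdd: "bdd_above (range (\<lambda>z. spec_norm (jacobian F z)))"
    and sig_gt1: "1 < (SUP z. spec_norm (jacobian F z))"
    and alpha_lo: "1 - 1 / (SUP z. spec_norm (jacobian F z)) < \<alpha>"
    and alpha_hi: "\<alpha> \<le> 1"
  shows "(1 - \<alpha>) * (SUP z. spec_norm (jacobian F z)) < 1
    \<and> (\<forall>(xs :: nat \<Rightarrow> real^'n) t z.
          spec_norm (jacobian (\<lambda>w. F (gtf_delta \<alpha> B w (xs t))) z)
            \<le> (1 - \<alpha>) * (SUP z. spec_norm (jacobian F z)))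
    \<and> (\<forall>(xs :: nat \<Rightarrow> real^'n) z0.
          lyap_gtf F \<alpha> B xs z0 \<le> elog ((1 - \<alpha>) * (SUP z. spec_norm (jacobian F z))))
    \<and> elog ((1 - \<alpha>) * (SUP z. spec_norm (jacobian F z))) < 0"
proof -
  define \<sigma> where "\<sigma> = (SUP z. spec_norm (jacobian F z))"
  have rho_lt_1: "(1 - \<alpha>) * \<sigma> < 1"
  proof -
    have "1 - \<alpha> < 1 / \<sigma>" using alpha_lo \<sigma>_def by simp
    then show ?thesis using sig_gt1 \<sigma>_def by (simp add: less_divide_eq)
  qed
  have forced: "spec_norm (jacobian (\<lambda>w. F (gtf_delta \<alpha> B w x)) z) \<le> (1 - \<alpha>) * \<sigma>" for x z
  proof -
    have "spec_norm (jacobian (\<lambda>w. F (gtf_delta \<alpha> B w x)) z)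
       = \<bar>1 - \<alpha>\<bar> * spec_norm (jacobian F ((1 - \<alpha>) *\<^sub>R z + \<alpha> *\<^sub>R (pinv B *v x)))"
      unfolding gtf_delta_full_rank[OF full_rank]
      by (simp only: jacobian_comp_scaleR_affine[OF diff[rule_format]] spec_norm_scaleR)
    also have "\<dots> \<le> (1 - \<alpha>) * \<sigma>"
      using alpha_hi unfolding \<sigma>_def
      by (intro mult_mono cSUP_upper bdd) (auto simp: spec_norm_nonneg)
    finally show ?thesis .
  qed
  have "elog ((1 - \<alpha>) * \<sigma>) < 0"
    using rho_lt_1 by (simp add: elog_def)
  then show ?thesis
    using rho_lt_1 forced lyap_gtf_le_elog[OF forced] unfolding \<sigma>_def by blast
qed

end
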